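(* Let $G$ be an infinite finitely generated residually finite group, $S$ a finite symmetric generating set, and $(X_n)_{n\ge0}$ the lazy random walk on $\mathrm{Cay}(G,S)$. If $\sum_{k\ge2}\frac{1}{[G:\Lambda_k]}$ diverges, then $\lim_{n\to\infty}\mathbb{E}[D_G(X_n)]=\infty$.
   Context: For $g\ne e$, $D_G(g)=\min\{[G:N]: N\lhd G\text{ of finite index},\ g\notin N\}$, and $D_G(e)=0$. For $k\ge2$, $\Lambda_k$ is the intersection of all normal subgroups of $G$ of index at most $k$. The lazy random walk on $\mathrm{Cay}(G,S)$ is the Markov chain with $X_0=e$ and transition matrix $\frac12 I+\frac12P$, where $P(x,y)=\frac1{|S|}\#\{s\in S:y=xs\}$. *)

theory Defs
  imports "HOL-Algebra.Algebra" "HOL-Probability.Probability"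
begin

definition grp_index :: "('a, 'b) monoid_scheme \<Rightarrow> 'a set \<Rightarrow> nat" where
  "grp_index G N = card (rcosets\<^bsub>G\<^esub> N)"

definition fin_index_normal :: "('a, 'b) monoid_scheme \<Rightarrow> 'a set \<Rightarrow> bool" where
  "fin_index_normal G N \<longleftrightarrow> N \<lhd> G \<and> finite (rcosets\<^bsub>G\<^esub> N)"

definition residually_finite :: "('a, 'b) monoid_scheme \<Rightarrow> bool" where
  "residually_finite G \<longleftrightarrow>
     (\<forall>g \<in> carrier G. g \<noteq> \<one>\<^bsub>G\<^esub> \<longrightarrow> (\<exists>N. fin_index_normal G N \<and> g \<notin> N))"

definition depth :: "('a, 'b) monoid_scheme \<Rightarrow> 'a \<Rightarrow> nat" where
  "depth G g = (if g = \<one>\<^bsub>G\<^esub> then 0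
     else (LEAST m. \<exists>N. fin_index_normal G N \<and> g \<notin> N \<and> grp_index G N = m))"

definition Lambda :: "('a, 'b) monoid_scheme \<Rightarrow> nat \<Rightarrow> 'a set" where
  "Lambda G k = \<Inter> {N. fin_index_normal G N \<and> grp_index G N \<le> k}"

definition lazy_step :: "('a, 'b) monoid_scheme \<Rightarrow> 'a set \<Rightarrow> 'a \<Rightarrow> 'a pmf" where
  "lazy_step G S x = bind_pmf (bernoulli_pmf (1/2))
     (\<lambda>b. if b then return_pmf x else map_pmf (\<lambda>s. x \<otimes>\<^bsub>G\<^esub> s) (pmf_of_set S))"

primrec lazy_walk :: "('a, 'b) monoid_scheme \<Rightarrow> 'a set \<Rightarrow> nat \<Rightarrow> 'a pmf" where
  "lazy_walk G S 0 = return_pmf \<one>\<^bsub>G\<^esub>"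
| "lazy_walk G S (Suc n) = bind_pmf (lazy_walk G S n) (lazy_step G S)"

end

theory Submission
  imports Defs
begin

text \<open>A nontrivial element of Lambda k lies in every normal subgroup of index at most k, so its
  depth exceeds k; hence E D(X n) is at least the sum over k < K of
  P(X n \<in> Lambda (k + 2)) - P(X n = e), for every K. For a subgroup N of finite index the
  probabilities of the cosets of N evolve under the averaging operator of the walk; since words of
  bounded length lead from every coset to every coset, a Doeblin argument contracts their
  oscillation geometrically, and P(X n \<in> N) tends to 1 / [G:N]. An infinite residually finite
  group has subgroups of arbitrarily large finite index, so P(X n = e) tends to 0. Letting first n
  and then K tend to infinity, the divergence of the series of 1 / [G : Lambda k] gives the claim.\<close>

lemma prob_bind_pmf:
  "measure_pmf.prob (bind_pmf M f) A = measure_pmf.expectation M (\<lambda>x. measure_pmf.prob (f x) A)"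
proof -
  have "ennreal (measure_pmf.prob (bind_pmf M f) A) = emeasure (bind_pmf M f) A"
    by (simp add: measure_pmf.emeasure_eq_measure)
  also have "\<dots> = (\<integral>\<^sup>+x. ennreal (measure_pmf.prob (f x) A) \<partial>M)"
    using emeasure_bind_pmf[of M f A] by (simp add: measure_pmf.emeasure_eq_measure)
  also have "\<dots> = ennreal (measure_pmf.expectation M (\<lambda>x. measure_pmf.prob (f x) A))"
    by (intro nn_integral_eq_integral measure_pmf.integrable_const_bound[where B=1]) auto
  finally show ?thesis by (simp add: ennreal_inj integral_nonneg_AE)
qed

lemma expectation_eq_sum_pmf:
  fixes f :: "'a \<Rightarrow> real"
  assumes "finite A" "set_pmf p \<subseteq> A"
  shows "measure_pmf.expectation p f = (\<Sum>x\<in>A. pmf p x * f x)"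
  using assms by (subst integral_measure_pmf[of A]) auto

lemma prob_eq_sum_pmf:
  assumes "finite A" "set_pmf p \<subseteq> A"
  shows "measure_pmf.prob p B = (\<Sum>x\<in>A. pmf p x * indicator B x)"
  using expectation_eq_sum_pmf[OF assms, of "indicator B"] by simp

lemma partial_sums_unbounded_if_not_summable:
  fixes a :: "nat \<Rightarrow> real"
  assumes "\<And>k. 0 \<le> a k" "\<not> summable a"
  shows "\<exists>K. B < (\<Sum>k<K. a k)"
  using assms summableI_nonneg_bounded[of a B] by (meson not_less)

lemma filterlim_at_top_from_lower_limits:
  fixes u :: "nat \<Rightarrow> real"
  assumes lower: "\<And>K n. L K n \<le> u n"
    and lim: "\<And>K. L K \<longlonglongrightarrow> s K"
    and unbounded: "\<And>B. \<exists>K. B < s K"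
  shows "filterlim u at_top sequentially"
  unfolding filterlim_at_top
proof
  fix B
  obtain K where "B < s K" using unbounded by blast
  with lim have "eventually (\<lambda>n. B < L K n) sequentially" by (rule order_tendstoD(1))
  then show "eventually (\<lambda>n. B \<le> u n) sequentially"
    by (rule eventually_mono) (use lower in \<open>meson less_imp_le order_trans\<close>)
qed

section \<open>Subgroups of finite index and depth\<close>

context group
begin

lemma rcosets_carrier: "rcosets (carrier G) = {carrier G}"
proof -
  have "carrier G #> x = carrier G" if "x \<in> carrier G" for x
    using coset_join2[OF that subgroup_self that] .
  then show ?thesis unfolding RCOSETS_def by auto
qed

lemma fin_index_normal_carrier: "fin_index_normal G (carrier G)"
  and grp_index_carrier: "grp_index G (carrier G) = 1"
  using normal_self rcosets_carrier by (auto simp: fin_index_normal_def grp_index_def)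

lemma subgroup_Lambda:
  assumes "1 \<le> k"
  shows "subgroup (Lambda G k) G"
proof -
  let ?F = "{N. fin_index_normal G N \<and> grp_index G N \<le> k}"
  have "carrier G \<in> ?F" using fin_index_normal_carrier grp_index_carrier assms by auto
  moreover have "subgroup H G" if "H \<in> ?F" for H
    using that normal_imp_subgroup by (auto simp: fin_index_normal_def)
  ultimately show ?thesis unfolding Lambda_def using subgroups_Inter[of ?F] by blast
qed

lemma generating_set_nonempty:
  assumes "infinite (carrier G)" "generate G S = carrier G"
  shows "S \<noteq> {}"
proof
  assume "S = {}"
  then have "carrier G = {\<one>}" using assms(2) generate_empty by simp
  with assms(1) show False by simp
qed

lemma depth_gt_if_mem_Lambda:
  assumes rf: "residually_finite G" and "1 \<le> k" and x: "x \<in> Lambda G k" and x1: "x \<noteq> \<one>"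
  shows "k < depth G x"
proof (rule ccontr)
  assume "\<not> k < depth G x"
  have "x \<in> carrier G" using subgroup.subset[OF subgroup_Lambda[OF \<open>1 \<le> k\<close>]] x by blast
  with rf x1 have "\<exists>m N. fin_index_normal G N \<and> x \<notin> N \<and> grp_index G N = m"
    unfolding residually_finite_def by blast
  from LeastI_ex[OF this] obtain N where N: "fin_index_normal G N" "x \<notin> N" "grp_index G N = depth G x"
    unfolding depth_def using x1 by auto
  with \<open>\<not> k < depth G x\<close> have "Lambda G k \<subseteq> N" unfolding Lambda_def by auto
  with x N(2) show False by blast
qed

lemma sum_indicator_Lambda_le_depth:
  assumes rf: "residually_finite G"
  shows "(\<Sum>k<K. indicator (Lambda G (k + 2)) x - indicator {\<one>} x) \<le> real (depth G x)"
proof (cases "x = \<one>")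
  case True
  then show ?thesis
    using subgroup.one_closed[OF subgroup_Lambda] by (simp add: depth_def)
next
  case False
  have "{..<K} \<inter> {k. x \<in> Lambda G (k + 2)} \<subseteq> {..<depth G x}"
    using depth_gt_if_mem_Lambda[OF rf _ _ False] by fastforce
  then have "card ({..<K} \<inter> {k. x \<in> Lambda G (k + 2)}) \<le> depth G x"
    using card_mono[of "{..<depth G x}"] by fastforce
  then show ?thesis using False by (simp add: indicator_def of_bool_def[symmetric])
qed

lemma r_coset_Inter:
  assumes F: "F \<noteq> {}" "\<And>H. H \<in> F \<Longrightarrow> subgroup H G" and x: "x \<in> carrier G"
  shows "(\<Inter>F) #> x = (\<Inter>H\<in>F. H #> x)"
proof -
  have sub: "subgroup (\<Inter>F) G" using subgroups_Inter F by blast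
  obtain H0 where H0: "H0 \<in> F" using F by blast
  have "(\<Inter>F) #> x \<subseteq> carrier G" "(\<Inter>H\<in>F. H #> x) \<subseteq> carrier G"
    using r_coset_subset_G[OF subgroup.subset[OF sub] x]
      r_coset_subset_G[OF subgroup.subset[OF F(2)[OF H0]] x] H0 by blast+
  moreover have "y \<in> (\<Inter>F) #> x \<longleftrightarrow> y \<in> (\<Inter>H\<in>F. H #> x)" if "y \<in> carrier G" for y
    using subgroup.rcos_module[OF sub is_group x that]
      subgroup.rcos_module[OF F(2) is_group x that] by blast
  ultimately show ?thesis by blast
qed

lemma finite_rcosets_Inter:
  assumes fin: "finite F" and ne: "F \<noteq> {}"
    and FH: "\<And>H. H \<in> F \<Longrightarrow> subgroup H G \<and> finite (rcosets H)"
  shows "finite (rcosets (\<Inter>F))"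
proof -
  have "rcosets (\<Inter>F) \<subseteq> (\<lambda>\<phi>. \<Inter>H\<in>F. \<phi> H) ` (Pi\<^sub>E F (\<lambda>H. rcosets H))"
  proof
    fix C assume "C \<in> rcosets (\<Inter>F)"
    then obtain x where x: "x \<in> carrier G" "C = (\<Inter>F) #> x" unfolding RCOSETS_def by auto
    have "C = (\<lambda>\<phi>. \<Inter>H\<in>F. \<phi> H) (restrict (\<lambda>H. H #> x) F)"
      using r_coset_Inter[OF ne _ x(1)] FH x(2) by simp
    moreover have "restrict (\<lambda>H. H #> x) F \<in> Pi\<^sub>E F (\<lambda>H. rcosets H)"
      using rcosetsI[OF subgroup.subset x(1)] FH by auto
    ultimately show "C \<in> (\<lambda>\<phi>. \<Inter>H\<in>F. \<phi> H) ` (Pi\<^sub>E F (\<lambda>H. rcosets H))" by blast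
  qed
  moreover have "finite (Pi\<^sub>E F (\<lambda>H. rcosets H))" using fin FH by (intro finite_PiE) auto
  ultimately show ?thesis using finite_subset by blast
qed

lemma card_le_card_rcosets_if_separated:
  assumes N: "subgroup N G" "finite (rcosets N)" and A: "A \<subseteq> carrier G"
    and sep: "\<And>x y. x \<in> A \<Longrightarrow> y \<in> A \<Longrightarrow> x \<noteq> y \<Longrightarrow> x \<otimes> inv y \<notin> N"
  shows "card A \<le> card (rcosets N)"
proof -
  have "inj_on (\<lambda>x. N #> x) A"
  proof (rule inj_onI, rule ccontr)
    fix x y assume x: "x \<in> A" and y: "y \<in> A" and eq: "N #> x = N #> y" and "x \<noteq> y"
    have "x \<in> N #> y" using rcos_self[of x N] x A N(1) eq by auto
    then have "x \<otimes> inv y \<in> N" using subgroup.rcos_module[OF N(1) is_group] x y A by blast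
    with sep x y \<open>x \<noteq> y\<close> show False by blast
  qed
  moreover have "(\<lambda>x. N #> x) ` A \<subseteq> rcosets N" using rcosetsI[OF subgroup.subset[OF N(1)]] A by auto
  ultimately show ?thesis using card_inj_on_le N(2) by blast
qed

lemma exists_subgroup_index_ge:
  assumes rf: "residually_finite G" and inf: "infinite (carrier G)"
  obtains N where "subgroup N G" "finite (rcosets N)" "M \<le> card (rcosets N)"
proof -
  obtain A where A: "finite A" "card A = M" "A \<subseteq> carrier G"
    using infinite_arbitrarily_large[OF inf] by blast
  define P where "P = {p \<in> A \<times> A. fst p \<noteq> snd p}"
  have "\<exists>N. fin_index_normal G N \<and> fst p \<otimes> inv (snd p) \<notin> N" if "p \<in> P" for p
  proof -
    have G: "fst p \<in> carrier G" "snd p \<in> carrier G" and "fst p \<noteq> snd p"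
      using that A unfolding P_def by auto
    then have "fst p \<otimes> inv (snd p) \<noteq> \<one>" by (metis inv_equality inv_inv inv_closed)
    with G rf show ?thesis unfolding residually_finite_def by auto
  qed
  then obtain sep where sep: "\<And>p. p \<in> P \<Longrightarrow> fin_index_normal G (sep p) \<and> fst p \<otimes> inv (snd p) \<notin> sep p"
    by metis
  define F where "F = insert (carrier G) (sep ` P)"
  have FH: "subgroup H G \<and> finite (rcosets H)" if "H \<in> F" for H
    using that sep fin_index_normal_carrier normal_imp_subgroup
    unfolding F_def fin_index_normal_def by auto
  have "finite F" "F \<noteq> {}" unfolding F_def P_def using A(1) by auto
  then have N: "subgroup (\<Inter>F) G" "finite (rcosets (\<Inter>F))"
    using subgroups_Inter[of F] FH finite_rcosets_Inter by auto
  have "x \<otimes> inv y \<notin> \<Inter>F" if "x \<in> A" "y \<in> A" "x \<noteq> y" for x y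
    using sep[of "(x, y)"] that unfolding F_def P_def by auto
  then have "card A \<le> card (rcosets (\<Inter>F))"
    using card_le_card_rcosets_if_separated[OF N A(3)] by blast
  with N A(2) that show ?thesis by blast
qed

end

section \<open>The averaging operator of the lazy walk\<close>

definition lazy_avg :: "('a, 'b) monoid_scheme \<Rightarrow> 'a set \<Rightarrow> ('a \<Rightarrow> real) \<Rightarrow> 'a \<Rightarrow> real" where
  "lazy_avg G S f g = (f g + (\<Sum>s\<in>S. f (g \<otimes>\<^bsub>G\<^esub> s)) / card S) / 2"

primrec word_ball :: "('a, 'b) monoid_scheme \<Rightarrow> 'a set \<Rightarrow> nat \<Rightarrow> 'a set" where
  "word_ball G S 0 = {\<one>\<^bsub>G\<^esub>}"
| "word_ball G S (Suc j) = word_ball G S j \<union> {s \<otimes>\<^bsub>G\<^esub> w | s w. s \<in> S \<and> w \<in> word_ball G S j}"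

locale step_set = group G for G :: "('a, 'b) monoid_scheme" (structure) +
  fixes S :: "'a set"
  assumes finite_S: "finite S" and S_carrier: "S \<subseteq> carrier G" and S_nonempty: "S \<noteq> {}"
begin

abbreviation T where "T \<equiv> lazy_avg G S"

lemma card_S_pos: "0 < card S"
  using finite_S S_nonempty by (simp add: card_gt_0_iff)

lemma lazy_avg_cong:
  "(\<And>x. x \<in> carrier G \<Longrightarrow> f x = f' x) \<Longrightarrow> g \<in> carrier G \<Longrightarrow> T f g = T f' g"
  unfolding lazy_avg_def using S_carrier by (auto intro!: sum.cong)

lemma lazy_avg_ge_const:
  assumes "\<And>x. x \<in> carrier G \<Longrightarrow> a \<le> f x" "g \<in> carrier G"
  shows "a \<le> T f g"
proof -
  have "(\<Sum>s\<in>S. a) \<le> (\<Sum>s\<in>S. f (g \<otimes> s))" using assms S_carrier by (intro sum_mono) auto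
  then have "a \<le> (\<Sum>s\<in>S. f (g \<otimes> s)) / card S" using card_S_pos by (simp add: field_simps)
  moreover have "a \<le> f g" using assms by blast
  ultimately show ?thesis unfolding lazy_avg_def by simp
qed

lemma lazy_avg_le_const:
  assumes "\<And>x. x \<in> carrier G \<Longrightarrow> f x \<le> b" "g \<in> carrier G"
  shows "T f g \<le> b"
proof -
  have "(\<Sum>s\<in>S. f (g \<otimes> s)) \<le> (\<Sum>s\<in>S. b)" using assms S_carrier by (intro sum_mono) auto
  then have "(\<Sum>s\<in>S. f (g \<otimes> s)) / card S \<le> b" using card_S_pos by (simp add: field_simps)
  moreover have "f g \<le> b" using assms by blast
  ultimately show ?thesis unfolding lazy_avg_def by simp
qed

lemma funpow_lazy_avg_ge_const:
  "(\<And>x. x \<in> carrier G \<Longrightarrow> a \<le> f x) \<Longrightarrow> g \<in> carrier G \<Longrightarrow> a \<le> (T ^^ j) f g"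
  by (induction j arbitrary: g) (simp_all add: lazy_avg_ge_const)

lemma funpow_lazy_avg_le_const:
  "(\<And>x. x \<in> carrier G \<Longrightarrow> f x \<le> b) \<Longrightarrow> g \<in> carrier G \<Longrightarrow> (T ^^ j) f g \<le> b"
  by (induction j arbitrary: g) (simp_all add: lazy_avg_le_const)

lemma funpow_lazy_avg_add_const: "(T ^^ j) (\<lambda>x. f x + a) = (\<lambda>x. (T ^^ j) f x + a)"
proof -
  have "T (\<lambda>x. f x + a) = (\<lambda>x. T f x + a)" for f
    using card_S_pos by (auto simp: lazy_avg_def sum.distrib field_simps)
  then show ?thesis by (induction j) simp_all
qed

lemma funpow_lazy_avg_const_diff: "(T ^^ j) (\<lambda>x. a - f x) = (\<lambda>x. a - (T ^^ j) f x)"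
proof -
  have "T (\<lambda>x. a - f x) = (\<lambda>x. a - T f x)" for f
    using card_S_pos by (auto simp: lazy_avg_def sum_subtractf field_simps)
  then show ?thesis by (induction j) simp_all
qed

definition oscillation_le :: "('a \<Rightarrow> real) \<Rightarrow> real \<Rightarrow> bool" where
  "oscillation_le f d \<longleftrightarrow> (\<exists>a. \<forall>x\<in>carrier G. a \<le> f x \<and> f x \<le> a + d)"

lemma oscillation_le_funpow_lazy_avg:
  assumes "oscillation_le f d"
  shows "oscillation_le ((T ^^ j) f) d"
proof -
  obtain a where "\<And>x. x \<in> carrier G \<Longrightarrow> a \<le> f x \<and> f x \<le> a + d"
    using assms unfolding oscillation_le_def by blast
  then show ?thesis unfolding oscillation_le_def
    using funpow_lazy_avg_ge_const[of a f] funpow_lazy_avg_le_const[of f "a + d"] by blast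
qed

definition coset_invariant :: "'a set \<Rightarrow> ('a \<Rightarrow> real) \<Rightarrow> bool" where
  "coset_invariant N f \<longleftrightarrow> (\<forall>n\<in>N. \<forall>x\<in>carrier G. f (n \<otimes> x) = f x)"

lemma coset_invariant_r_coset:
  assumes "coset_invariant N f" "y \<in> N #> h" "h \<in> carrier G"
  shows "f y = f h"
  using assms unfolding coset_invariant_def r_coset_def by auto

lemma coset_invariant_funpow_lazy_avg:
  assumes N: "subgroup N G" and inv: "coset_invariant N f"
  shows "coset_invariant N ((T ^^ j) f)"
proof (induction j)
  case (Suc j)
  have "(T ^^ j) f (n \<otimes> x \<otimes> s) = (T ^^ j) f (x \<otimes> s)"
    if "n \<in> N" "x \<in> carrier G" "s \<in> S" for n x s
    using Suc that S_carrier subgroup.mem_carrier[OF N]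
    unfolding coset_invariant_def by (auto simp: m_assoc)
  with Suc show ?case unfolding coset_invariant_def lazy_avg_def by simp
qed (use inv in simp)

lemma word_ball_carrier: "word_ball G S j \<subseteq> carrier G"
  by (induction j) (use S_carrier in auto)

lemma word_ball_mono: "j \<le> k \<Longrightarrow> word_ball G S j \<subseteq> word_ball G S k"
  by (induction k) (auto simp: le_Suc_eq)

lemma word_ball_mult:
  "x \<in> word_ball G S a \<Longrightarrow> y \<in> word_ball G S b \<Longrightarrow> x \<otimes> y \<in> word_ball G S (a + b)"
proof (induction a arbitrary: x)
  case 0
  then show ?case using word_ball_carrier[of b] by auto
next
  case (Suc a)
  from Suc.prems(1) consider "x \<in> word_ball G S a"
    | s w where "s \<in> S" "w \<in> word_ball G S a" "x = s \<otimes> w"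
    by auto
  then show ?case
  proof cases
    case 2
    then have "x \<otimes> y = s \<otimes> (w \<otimes> y)"
      using S_carrier word_ball_carrier Suc.prems(2) by (blast intro: m_assoc)
    with 2 Suc show ?thesis by auto
  qed (use Suc in auto)
qed

definition step_weight :: real where
  "step_weight = 1 / (2 * real (card S))"

lemma step_weight_pos: "0 < step_weight" and step_weight_le_half: "step_weight \<le> 1/2"
  using card_S_pos by (auto simp: step_weight_def field_simps)

lemma lazy_avg_ge_weighted:
  assumes F0: "\<And>x. x \<in> carrier G \<Longrightarrow> 0 \<le> F x" and g: "g \<in> carrier G"
  shows "F g / 2 \<le> T F g" and "s \<in> S \<Longrightarrow> step_weight * F (g \<otimes> s) \<le> T F g"
proof -
  have "0 \<le> (\<Sum>s\<in>S. F (g \<otimes> s))" using F0 g S_carrier by (intro sum_nonneg) auto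
  then show "F g / 2 \<le> T F g" unfolding lazy_avg_def by simp
  assume "s \<in> S"
  then have "F (g \<otimes> s) \<le> (\<Sum>s\<in>S. F (g \<otimes> s))"
    using F0 g S_carrier finite_S by (intro member_le_sum) auto
  then have "step_weight * F (g \<otimes> s) \<le> (\<Sum>s\<in>S. F (g \<otimes> s)) / card S / 2"
    using card_S_pos by (simp add: step_weight_def field_simps)
  with F0 g show "step_weight * F (g \<otimes> s) \<le> T F g" unfolding lazy_avg_def by force
qed

text \<open>Each word of length at most \<open>j\<close> is followed by the walk with probability at least
  \<open>step_weight ^ j\<close>: an empty letter is a lazy step, of weight \<open>1/2 \<ge> step_weight\<close>.\<close>
lemma funpow_lazy_avg_ge_word:
  assumes f0: "\<And>x. x \<in> carrier G \<Longrightarrow> 0 \<le> f x"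
  shows "g \<in> carrier G \<Longrightarrow> w \<in> word_ball G S j \<Longrightarrow> step_weight ^ j * f (g \<otimes> w) \<le> (T ^^ j) f g"
proof (induction j arbitrary: g w)
  case (Suc j)
  let ?F = "(T ^^ j) f"
  have nonneg: "\<And>x. x \<in> carrier G \<Longrightarrow> 0 \<le> ?F x" using funpow_lazy_avg_ge_const f0 by blast
  have "g \<otimes> w \<in> carrier G" using Suc.prems word_ball_carrier by blast
  then have fw: "0 \<le> step_weight ^ j * f (g \<otimes> w)" using f0 step_weight_pos by simp
  from Suc.prems(2) consider "w \<in> word_ball G S j"
    | s w' where "s \<in> S" "w' \<in> word_ball G S j" "w = s \<otimes> w'"
    by auto
  then show ?case
  proof cases
    case 1
    have "step_weight ^ Suc j * f (g \<otimes> w) \<le> (1/2) * (step_weight ^ j * f (g \<otimes> w))"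
      using mult_right_mono[OF step_weight_le_half fw] by simp
    also have "\<dots> \<le> ?F g / 2" using Suc.IH[OF Suc.prems(1) 1] by simp
    also have "\<dots> \<le> T ?F g" using lazy_avg_ge_weighted(1)[OF nonneg Suc.prems(1)] .
    finally show ?thesis by simp
  next
    case 2
    have gs: "g \<otimes> s \<in> carrier G" using Suc.prems(1) 2(1) S_carrier by auto
    have "g \<otimes> w = g \<otimes> s \<otimes> w'"
      using 2 Suc.prems(1) S_carrier word_ball_carrier by (simp add: m_assoc subset_iff)
    then have "step_weight ^ Suc j * f (g \<otimes> w) = step_weight * (step_weight ^ j * f (g \<otimes> s \<otimes> w'))"
      by simp
    also have "\<dots> \<le> step_weight * ?F (g \<otimes> s)"
      using Suc.IH[OF gs 2(2)] step_weight_pos by (intro mult_left_mono) auto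
    also have "\<dots> \<le> T ?F g" using lazy_avg_ge_weighted(2)[OF nonneg Suc.prems(1) 2(1)] .
    finally show ?thesis by simp
  qed
qed simp

text \<open>Doeblin's argument: along a word leading into \<open>N\<close>, the preceding lemma bounds both
  \<open>T ^^ r\<close> of \<open>f - a\<close> and of \<open>a + d - f\<close> from below by \<open>step_weight ^ r\<close> times their values at \<open>\<one>\<close>.\<close>
lemma oscillation_le_lazy_avg_contract:
  assumes cov: "\<forall>g\<in>carrier G. \<forall>h\<in>carrier G. \<exists>w\<in>word_ball G S r. g \<otimes> w \<in> N #> h"
    and inv: "coset_invariant N f" and osc: "oscillation_le f d"
  shows "oscillation_le ((T ^^ r) f) ((1 - step_weight ^ r) * d)"
proof -
  let ?c = "step_weight ^ r"
  obtain a where bd: "\<And>x. x \<in> carrier G \<Longrightarrow> a \<le> f x \<and> f x \<le> a + d"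
    using osc unfolding oscillation_le_def by blast
  have "a + ?c * (f \<one> - a) \<le> (T ^^ r) f x \<and> (T ^^ r) f x \<le> a + ?c * (f \<one> - a) + (1 - ?c) * d"
    if x: "x \<in> carrier G" for x
  proof -
    obtain w where w: "w \<in> word_ball G S r" "x \<otimes> w \<in> N #> \<one>" using cov x by blast
    have fw: "f (x \<otimes> w) = f \<one>" using coset_invariant_r_coset[OF inv w(2)] by simp
    have "?c * (f (x \<otimes> w) + (- a)) \<le> (T ^^ r) (\<lambda>y. f y + (- a)) x"
      using funpow_lazy_avg_ge_word[of "\<lambda>y. f y + (- a)", OF _ x w(1)] bd by force
    moreover have "?c * ((a + d) - f (x \<otimes> w)) \<le> (T ^^ r) (\<lambda>y. (a + d) - f y) x"
      using funpow_lazy_avg_ge_word[of "\<lambda>y. (a + d) - f y", OF _ x w(1)] bd by force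
    ultimately show ?thesis
      unfolding funpow_lazy_avg_add_const funpow_lazy_avg_const_diff fw by (simp add: algebra_simps)
  qed
  then show ?thesis unfolding oscillation_le_def by blast
qed

lemma oscillation_le_funpow_lazy_avg_decay:
  assumes N: "subgroup N G"
    and cov: "\<forall>g\<in>carrier G. \<forall>h\<in>carrier G. \<exists>w\<in>word_ball G S r. g \<otimes> w \<in> N #> h"
    and inv: "coset_invariant N f" and osc: "oscillation_le f 1"
  shows "oscillation_le ((T ^^ n) f) ((1 - step_weight ^ r) ^ (n div r))"
proof -
  have "oscillation_le ((T ^^ (k * r)) f) ((1 - step_weight ^ r) ^ k)" for k
  proof (induction k)
    case (Suc k)
    have "(T ^^ (Suc k * r)) f = (T ^^ r) ((T ^^ (k * r)) f)" by (simp add: funpow_add)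
    then show ?case
      using oscillation_le_lazy_avg_contract[OF cov coset_invariant_funpow_lazy_avg[OF N inv] Suc]
      by simp
  qed (use osc in simp)
  moreover have "(T ^^ n) f = (T ^^ (n mod r)) ((T ^^ (n div r * r)) f)"
    by (metis funpow_add comp_apply mod_div_decomp add.commute)
  ultimately show ?thesis using oscillation_le_funpow_lazy_avg by metis
qed

lemma set_pmf_lazy_step: "set_pmf (lazy_step G S x) \<subseteq> insert x ((\<lambda>s. x \<otimes> s) ` S)"
proof -
  have "set_pmf (pmf_of_set S) = S" using S_nonempty finite_S by simp
  then show ?thesis unfolding lazy_step_def by (auto split: if_splits)
qed

lemma set_pmf_lazy_walk:
  "set_pmf (lazy_walk G S n) \<subseteq> carrier G \<and> finite (set_pmf (lazy_walk G S n))"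
proof (induction n)
  case (Suc n)
  have "set_pmf (lazy_step G S x) \<subseteq> carrier G" if "x \<in> carrier G" for x
    using set_pmf_lazy_step[of x] that S_carrier by auto
  moreover have "finite (set_pmf (lazy_step G S x))" for x
    using set_pmf_lazy_step[of x] finite_S by (meson finite_imageI finite_insert finite_subset)
  ultimately show ?case using Suc by auto
qed simp

lemma prob_lazy_step:
  "measure_pmf.prob (lazy_step G S x) A = (indicator A x + card {s\<in>S. x \<otimes> s \<in> A} / card S) / 2"
proof -
  have "S \<inter> (\<lambda>s. x \<otimes> s) -` A = {s\<in>S. x \<otimes> s \<in> A}" by auto
  then show ?thesis
    unfolding lazy_step_def prob_bind_pmf using finite_S S_nonempty by (simp add: measure_pmf_of_set)
qed

end

section \<open>Equidistribution on cosets\<close>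

locale cayley_walk = step_set +
  assumes inv_S: "\<forall>s\<in>S. inv s \<in> S" and generate_S: "generate G S = carrier G"
begin

lemma word_ball_inv: "x \<in> word_ball G S a \<Longrightarrow> inv x \<in> word_ball G S a"
proof (induction a arbitrary: x)
  case (Suc a)
  from Suc.prems consider "x \<in> word_ball G S a"
    | s w where "s \<in> S" "w \<in> word_ball G S a" "x = s \<otimes> w"
    by auto
  then show ?case
  proof cases
    case 2
    have "inv s \<in> word_ball G S 1" using 2 inv_S S_carrier by force
    then have "inv w \<otimes> inv s \<in> word_ball G S (Suc a)"
      using word_ball_mult[OF Suc.IH[OF 2(2)]] by (metis Suc_eq_plus1)
    moreover have "inv x = inv w \<otimes> inv s"
      using 2 S_carrier word_ball_carrier by (simp add: inv_mult_group subset_iff)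
    ultimately show ?thesis by simp
  qed (use Suc in simp)
qed simp

lemma word_ball_exhausts: "x \<in> carrier G \<Longrightarrow> \<exists>j. x \<in> word_ball G S j"
proof -
  have letter: "h \<in> word_ball G S 1" if "h \<in> S" for h
    using that S_carrier r_one[of h] by force
  assume "x \<in> carrier G"
  then have "x \<in> generate G S" using generate_S by simp
  then show ?thesis
  proof (induction rule: generate.induct)
    case one
    have "\<one> \<in> word_ball G S 0" by simp
    then show ?case ..
  next
    case (incl h)
    then show ?case using letter by blast
  next
    case (inv h)
    then show ?case using letter word_ball_inv by blast
  next
    case (eng h1 h2)
    then obtain j1 j2 where "h1 \<in> word_ball G S j1" "h2 \<in> word_ball G S j2" by blast
    then show ?case using word_ball_mult by blast
  qed
qed

lemma word_ball_meets_all: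
  assumes "finite \<A>" "\<And>A. A \<in> \<A> \<Longrightarrow> A \<inter> carrier G \<noteq> {}"
  shows "\<exists>r. \<forall>A\<in>\<A>. A \<inter> word_ball G S r \<noteq> {}"
  using assms
proof (induction \<A> rule: finite_induct)
  case (insert A \<A>)
  then obtain r where r: "\<forall>B\<in>\<A>. B \<inter> word_ball G S r \<noteq> {}" by auto
  obtain j where "A \<inter> word_ball G S j \<noteq> {}" using insert.prems word_ball_exhausts by blast
  moreover have grow: "B \<inter> word_ball G S k \<noteq> {}" if "B \<inter> word_ball G S i \<noteq> {}" "i \<le> k" for B i k
    using that word_ball_mono[of i k] by blast
  ultimately have "B \<inter> word_ball G S (max r j) \<noteq> {}" if "B \<in> insert A \<A>" for B
    using that r by (metis insert_iff max.cobounded1 max.cobounded2)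
  then show ?case by blast
qed simp

text \<open>Whether \<open>g \<otimes> w \<in> N #> h\<close> depends only on the cosets of \<open>g\<close> and \<open>h\<close>, so finitely
  many conditions on \<open>w\<close> have to be met.\<close>
lemma word_ball_reaches_cosets:
  assumes N: "subgroup N G" and fin: "finite (rcosets N)"
  obtains r where "1 \<le> r" "\<forall>g\<in>carrier G. \<forall>h\<in>carrier G. \<exists>w\<in>word_ball G S r. g \<otimes> w \<in> N #> h"
proof -
  define link where "link C D = {w \<in> carrier G. \<forall>g\<in>C. g \<otimes> w \<in> D}" for C D
  have link_nonempty: "inv g0 \<otimes> h0 \<in> link (N #> g0) (N #> h0)"
    if g0: "g0 \<in> carrier G" and h0: "h0 \<in> carrier G" for g0 h0
  proof -
    have "g \<otimes> (inv g0 \<otimes> h0) \<in> N #> h0" if g: "g \<in> N #> g0" for g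
    proof -
      have gG: "g \<in> carrier G" using g r_coset_subset_G[OF subgroup.subset[OF N] g0] by blast
      have "g \<otimes> (inv g0 \<otimes> h0) \<otimes> inv h0 = g \<otimes> inv g0" using gG g0 h0 by (simp add: m_assoc)
      then show ?thesis
        using subgroup.rcos_module[OF N is_group, of h0] subgroup.rcos_module_imp[OF N is_group g0 g]
          gG g0 h0 by simp
    qed
    then show ?thesis unfolding link_def using g0 h0 by simp
  qed
  define links where "links = (\<lambda>(C, D). link C D) ` ((rcosets N) \<times> (rcosets N))"
  have "finite links" unfolding links_def using fin by simp
  moreover have "A \<inter> carrier G \<noteq> {}" if "A \<in> links" for A
  proof -
    from that obtain g0 h0 where "g0 \<in> carrier G" "h0 \<in> carrier G" "A = link (N #> g0) (N #> h0)"
      unfolding links_def RCOSETS_def by blast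
    then show ?thesis using link_nonempty[of g0 h0] unfolding link_def by blast
  qed
  ultimately obtain r where r: "\<forall>A\<in>links. A \<inter> word_ball G S r \<noteq> {}"
    using word_ball_meets_all by blast
  have "\<exists>w\<in>word_ball G S (Suc r). g \<otimes> w \<in> N #> h" if "g \<in> carrier G" "h \<in> carrier G" for g h
  proof -
    have "(N #> g, N #> h) \<in> (rcosets N) \<times> (rcosets N)"
      using rcosetsI[OF subgroup.subset[OF N]] that by simp
    then have "link (N #> g) (N #> h) \<in> links" unfolding links_def by (rule rev_image_eqI) simp
    with r have "link (N #> g) (N #> h) \<inter> word_ball G S r \<noteq> {}" by blast
    then obtain w where "w \<in> link (N #> g) (N #> h)" "w \<in> word_ball G S r" by blast
    then have "w \<in> word_ball G S r" "\<forall>g'\<in>N #> g. g' \<otimes> w \<in> N #> h" unfolding link_def by simp_all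
    then show ?thesis using rcos_self[OF \<open>g \<in> carrier G\<close> N] word_ball_mono[of r "Suc r"] by auto
  qed
  then show ?thesis by (intro that[of "Suc r"]) auto
qed

lemma sum_inv_S_reindex:
  fixes f :: "'a \<Rightarrow> real"
  shows "(\<Sum>s\<in>S. f (inv s)) = (\<Sum>s\<in>S. f s)"
  by (rule sum.reindex_bij_witness[where i = "\<lambda>s. inv s" and j = "\<lambda>s. inv s"]) (use S_carrier inv_S in auto)

lemma r_coset_mult_iff:
  assumes "subgroup N G" "x \<in> carrier G" "g \<in> carrier G" "s \<in> carrier G"
  shows "x \<otimes> s \<in> N #> g \<longleftrightarrow> x \<in> N #> (g \<otimes> inv s)"
proof -
  have "x \<otimes> inv (g \<otimes> inv s) = x \<otimes> s \<otimes> inv g"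
    using assms by (simp add: inv_mult_group m_assoc)
  then show ?thesis using subgroup.rcos_module[OF assms(1) is_group] assms by simp
qed

text \<open>By the symmetry of \<open>S\<close>, the coset probabilities evolve under the same operator \<open>T\<close>.\<close>
lemma prob_lazy_walk_Suc_r_coset:
  assumes N: "subgroup N G" and g: "g \<in> carrier G"
  shows "measure_pmf.prob (lazy_walk G S (Suc n)) (N #> g)
       = T (\<lambda>h. measure_pmf.prob (lazy_walk G S n) (N #> h)) g"
proof -
  let ?p = "lazy_walk G S n"
  let ?F = "set_pmf ?p"
  have F: "?F \<subseteq> carrier G" "finite ?F" using set_pmf_lazy_walk by auto
  have card_eq: "real (card {s\<in>S. x \<otimes> s \<in> N #> g}) = (\<Sum>s\<in>S. indicator (N #> (g \<otimes> inv s)) x)"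
    if "x \<in> carrier G" for x
  proof -
    have "{s\<in>S. x \<otimes> s \<in> N #> g} = S \<inter> {s. x \<in> N #> (g \<otimes> inv s)}"
      using r_coset_mult_iff[OF N that g] S_carrier by auto
    then show ?thesis using finite_S by (simp add: indicator_def of_bool_def[symmetric])
  qed
  have "measure_pmf.prob (lazy_walk G S (Suc n)) (N #> g)
      = (\<Sum>x\<in>?F. pmf ?p x * measure_pmf.prob (lazy_step G S x) (N #> g))"
    by (simp add: prob_bind_pmf expectation_eq_sum_pmf[OF F(2)])
  also have "\<dots> = (\<Sum>x\<in>?F. pmf ?p x * ((indicator (N #> g) x
        + (\<Sum>s\<in>S. indicator (N #> (g \<otimes> inv s)) x) / card S) / 2))"
    using F card_eq by (intro sum.cong refl) (auto simp: prob_lazy_step)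
  also have "\<dots> = ((\<Sum>x\<in>?F. pmf ?p x * indicator (N #> g) x)
        + (\<Sum>s\<in>S. \<Sum>x\<in>?F. pmf ?p x * indicator (N #> (g \<otimes> inv s)) x) / card S) / 2"
    by (simp add: sum_distrib_left ring_distribs sum_divide_distrib sum.distrib add_divide_distrib
        sum.swap[of _ S] mult.assoc)
  also have "\<dots> = T (\<lambda>h. measure_pmf.prob ?p (N #> h)) g"
    using sum_inv_S_reindex[of "\<lambda>s. measure_pmf.prob ?p (N #> (g \<otimes> s))"]
    by (simp add: lazy_avg_def prob_eq_sum_pmf[OF F(2) order_refl])
  finally show ?thesis .
qed

lemma prob_lazy_walk_r_coset:
  assumes N: "subgroup N G"
  shows "x \<in> carrier G \<Longrightarrow> measure_pmf.prob (lazy_walk G S n) (N #> x)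
     = (T ^^ n) (\<lambda>h. measure_pmf.prob (lazy_walk G S 0) (N #> h)) x"
proof (induction n arbitrary: x)
  case (Suc n)
  then show ?case
    using prob_lazy_walk_Suc_r_coset[OF N Suc.prems] lazy_avg_cong[OF Suc.IH Suc.prems] by simp
qed simp

lemma sum_prob_rcosets:
  assumes N: "subgroup N G" and fin: "finite (rcosets N)"
  shows "(\<Sum>C\<in>rcosets N. measure_pmf.prob (lazy_walk G S n) C) = 1"
proof -
  have "(\<Sum>C\<in>rcosets N. measure_pmf.prob (lazy_walk G S n) C)
      = measure_pmf.prob (lazy_walk G S n) (\<Union>C\<in>rcosets N. C)"
    using fin rcos_disjoint[OF N]
    by (intro measure_pmf.finite_measure_finite_Union[symmetric])
       (auto simp: disjoint_family_on_def pairwise_def disjnt_def)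
  also have "(\<Union>C\<in>rcosets N. C) = carrier G" using rcosets_part_G[OF N] by simp
  also have "measure_pmf.prob (lazy_walk G S n) (carrier G) = 1"
    using set_pmf_lazy_walk[of n] by (subst measure_pmf.prob_eq_1) (auto simp: AE_measure_pmf_iff)
  finally show ?thesis .
qed

text \<open>All coset probabilities lie in a common band of this width and add up to \<open>1\<close>, so each of
  them is within the width of \<open>1 / [G:N]\<close>.\<close>
lemma prob_lazy_walk_subgroup_approx:
  assumes N: "subgroup N G" and fin: "finite (rcosets N)"
    and cov: "\<forall>g\<in>carrier G. \<forall>h\<in>carrier G. \<exists>w\<in>word_ball G S r. g \<otimes> w \<in> N #> h"
  shows "\<bar>measure_pmf.prob (lazy_walk G S n) N - 1 / card (rcosets N)\<bar>
    \<le> (1 - step_weight ^ r) ^ (n div r)"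
proof -
  let ?P = "measure_pmf.prob (lazy_walk G S n)" and ?m = "card (rcosets N)"
  and ?d = "(1 - step_weight ^ r) ^ (n div r)"
  define f0 where "f0 h = measure_pmf.prob (lazy_walk G S 0) (N #> h)" for h
  have "N #> (m \<otimes> x) = N #> x" if "m \<in> N" "x \<in> carrier G" for m x
    using coset_mult_assoc[OF subgroup.subset[OF N] subgroup.mem_carrier[OF N] that(2)]
      coset_join2[OF subgroup.mem_carrier[OF N] N] that by simp
  then have "coset_invariant N f0" unfolding coset_invariant_def f0_def by simp
  moreover have "oscillation_le f0 1" unfolding oscillation_le_def f0_def by (auto intro: exI[of _ 0])
  ultimately obtain a where a: "\<forall>x\<in>carrier G. a \<le> (T ^^ n) f0 x \<and> (T ^^ n) f0 x \<le> a + ?d"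
    using oscillation_le_funpow_lazy_avg_decay[OF N cov] unfolding oscillation_le_def by blast
  have band: "a \<le> ?P C \<and> ?P C \<le> a + ?d" if "C \<in> rcosets N" for C
    using that a prob_lazy_walk_r_coset[OF N] unfolding RCOSETS_def f0_def by auto
  have "0 < ?m" using fin rcosetsI[OF subgroup.subset[OF N] one_closed] card_gt_0_iff by blast
  moreover have "?m * a \<le> 1" "1 \<le> ?m * (a + ?d)"
    using sum_mono[of "rcosets N" "\<lambda>_. a" ?P] sum_mono[of "rcosets N" ?P "\<lambda>_. a + ?d"]
      band sum_prob_rcosets[OF N fin] by auto
  ultimately have "a \<le> 1 / ?m" "1 / ?m \<le> a + ?d" by (simp_all add: field_simps)
  moreover have "a \<le> ?P N \<and> ?P N \<le> a + ?d"
    using band[OF rcosetsI[OF subgroup.subset[OF N] one_closed]] subgroup.subset[OF N] by simp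
  ultimately show ?thesis by linarith
qed

lemma tendsto_prob_lazy_walk_subgroup:
  assumes N: "subgroup N G" and fin: "finite (rcosets N)"
  shows "(\<lambda>n. measure_pmf.prob (lazy_walk G S n) N) \<longlonglongrightarrow> 1 / card (rcosets N)"
proof -
  obtain r where "1 \<le> r" and cov: "\<forall>g\<in>carrier G. \<forall>h\<in>carrier G. \<exists>w\<in>word_ball G S r. g \<otimes> w \<in> N #> h"
    using word_ball_reaches_cosets[OF N fin] by blast
  have "0 \<le> 1 - step_weight ^ r" "1 - step_weight ^ r < 1"
    using step_weight_pos step_weight_le_half by (auto simp: power_le_one)
  then have "(\<lambda>k. (1 - step_weight ^ r) ^ k) \<longlonglongrightarrow> 0" by (intro LIMSEQ_power_zero) auto
  then have "(\<lambda>n. (1 - step_weight ^ r) ^ (n div r)) \<longlonglongrightarrow> 0"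
    using filterlim_compose[OF _ filterlim_at_top_div_const_nat[of r]] \<open>1 \<le> r\<close> by simp
  then have "(\<lambda>n. measure_pmf.prob (lazy_walk G S n) N - 1 / card (rcosets N)) \<longlonglongrightarrow> 0"
    by (rule Lim_null_comparison[rotated]) (use prob_lazy_walk_subgroup_approx[OF N fin cov] in simp)
  then show ?thesis by (simp add: LIM_zero_iff)
qed

text \<open>For a subgroup of infinite index \<open>grp_index\<close> is \<open>0\<close>, and so is the bound.\<close>
lemma prob_lazy_walk_subgroup_lower_limit:
  assumes "subgroup N G"
  shows "\<exists>b. b \<longlonglongrightarrow> 1 / real (grp_index G N) \<and> (\<forall>n. b n \<le> measure_pmf.prob (lazy_walk G S n) N)"
proof (cases "finite (rcosets N)")
  case True
  then show ?thesis using tendsto_prob_lazy_walk_subgroup[OF assms] unfolding grp_index_def by blast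
next
  case False
  then show ?thesis unfolding grp_index_def by (intro exI[of _ "\<lambda>_. 0"]) simp
qed

lemma tendsto_prob_lazy_walk_one:
  assumes rf: "residually_finite G" and inf: "infinite (carrier G)"
  shows "(\<lambda>n. measure_pmf.prob (lazy_walk G S n) {\<one>}) \<longlonglongrightarrow> 0"
proof (rule order_tendstoI)
  fix a :: real assume "a < 0"
  then show "eventually (\<lambda>n. a < measure_pmf.prob (lazy_walk G S n) {\<one>}) sequentially"
    by (intro always_eventually allI) (meson measure_nonneg less_le_trans)
next
  fix e :: real assume "0 < e"
  then obtain M :: nat where M: "1 / e < M" using reals_Archimedean2 by blast
  obtain N where N: "subgroup N G" "finite (rcosets N)" "M \<le> card (rcosets N)"
    using exists_subgroup_index_ge[OF rf inf] by blast
  have "1 / e < card (rcosets N)" using M N(3) by (meson of_nat_le_iff less_le_trans)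
  with \<open>0 < e\<close> have "1 / real (card (rcosets N)) < e"
    by (smt (verit) divide_less_eq divide_pos_pos mult.commute)
  with tendsto_prob_lazy_walk_subgroup[OF N(1,2)]
  have "eventually (\<lambda>n. measure_pmf.prob (lazy_walk G S n) N < e) sequentially"
    by (rule order_tendstoD(2))
  then show "eventually (\<lambda>n. measure_pmf.prob (lazy_walk G S n) {\<one>} < e) sequentially"
  proof (rule eventually_mono)
    fix n
    have "measure_pmf.prob (lazy_walk G S n) {\<one>} \<le> measure_pmf.prob (lazy_walk G S n) N"
      using subgroup.one_closed[OF N(1)] by (intro measure_pmf.finite_measure_mono) auto
    then show "measure_pmf.prob (lazy_walk G S n) N < e \<Longrightarrow> measure_pmf.prob (lazy_walk G S n) {\<one>} < e"
      by linarith
  qed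
qed

lemma sum_prob_Lambda_le_expectation_depth:
  assumes rf: "residually_finite G"
  shows "(\<Sum>k<K. measure_pmf.prob (lazy_walk G S n) (Lambda G (k + 2))
            - measure_pmf.prob (lazy_walk G S n) {\<one>})
      \<le> measure_pmf.expectation (lazy_walk G S n) (\<lambda>x. real (depth G x))"
proof -
  let ?p = "lazy_walk G S n"
  have int: "integrable (measure_pmf ?p) f" for f :: "'a \<Rightarrow> real"
    using set_pmf_lazy_walk by (intro integrable_measure_pmf_finite) auto
  have "(\<Sum>k<K. measure_pmf.prob ?p (Lambda G (k + 2)) - measure_pmf.prob ?p {\<one>})
      = (\<Sum>k<K. measure_pmf.expectation ?p
          (\<lambda>x. indicator (Lambda G (k + 2)) x - indicator {\<one>} x))"
    by (simp add: Bochner_Integration.integral_diff[OF int int])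
  also have "\<dots> = measure_pmf.expectation ?p
      (\<lambda>x. \<Sum>k<K. indicator (Lambda G (k + 2)) x - indicator {\<one>} x)"
    by (rule sym, rule Bochner_Integration.integral_sum, rule int)
  also have "\<dots> \<le> measure_pmf.expectation ?p (\<lambda>x. real (depth G x))"
    by (rule integral_mono[OF int int sum_indicator_Lambda_le_depth[OF rf]])
  finally show ?thesis .
qed

end

theorem corollary4p2:
  fixes G :: "('a, 'b) monoid_scheme" and S :: "'a set"
  assumes "group G"
    and "infinite (carrier G)"
    and "residually_finite G"
    and "finite S" and "S \<subseteq> carrier G"
    and "\<forall>s \<in> S. inv\<^bsub>G\<^esub> s \<in> S"
    and "generate G S = carrier G"
    and "\<not> summable (\<lambda>k. 1 / real (grp_index G (Lambda G (k + 2))))"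
  shows "filterlim (\<lambda>n. measure_pmf.expectation (lazy_walk G S n) (\<lambda>x. real (depth G x)))
           at_top sequentially"
proof -
  interpret group G by fact
  have "S \<noteq> {}" using assms(2,7) by (rule generating_set_nonempty)
  interpret cayley_walk G S using assms \<open>S \<noteq> {}\<close> by unfold_locales auto
  let ?P = "\<lambda>n. measure_pmf.prob (lazy_walk G S n)"
  define a where "a = (\<lambda>k. 1 / real (grp_index G (Lambda G (k + 2))))"
  have a_nonneg: "0 \<le> a k" for k unfolding a_def by simp
  have a_not_summable: "\<not> summable a" unfolding a_def by fact
  have "\<forall>k. \<exists>b. b \<longlonglongrightarrow> a k \<and> (\<forall>n. b n \<le> ?P n (Lambda G (k + 2)))"
    using prob_lazy_walk_subgroup_lower_limit[OF subgroup_Lambda] unfolding a_def by simp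
  then obtain b where b: "\<And>k. b k \<longlonglongrightarrow> a k" "\<And>k n. b k n \<le> ?P n (Lambda G (k + 2))"
    by metis
  show ?thesis
  proof (rule filterlim_at_top_from_lower_limits)
    show "(\<Sum>k<K. b k n - ?P n {\<one>\<^bsub>G\<^esub>})
        \<le> measure_pmf.expectation (lazy_walk G S n) (\<lambda>x. real (depth G x))" for K n
      by (rule order_trans[OF sum_mono sum_prob_Lambda_le_expectation_depth[OF assms(3)]])
        (intro diff_right_mono b(2))
    show "(\<lambda>n. \<Sum>k<K. b k n - ?P n {\<one>\<^bsub>G\<^esub>}) \<longlonglongrightarrow> (\<Sum>k<K. a k - 0)" for K
      by (intro tendsto_sum tendsto_diff b(1) tendsto_prob_lazy_walk_one assms(2,3))
    show "\<exists>K. B < (\<Sum>k<K. a k - 0)" for B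
      using partial_sums_unbounded_if_not_summable[OF a_nonneg a_not_summable] by simp
  qed
qed

end
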